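(* Let $\alpha_1,\alpha_2$ be nonzero real constants with $\alpha_1\neq\alpha_2$, and consider the lattice Schwarzian KdV equation for a field $x_{n,m}$, $(n,m)\in\mathbb{Z}^2$: $$\mathbb{Q}\equiv \alpha_1 (x_{n,m}-x_{n,m+1})(x_{n+1,m}-x_{n+1,m+1})-\alpha_2 (x_{n,m}-x_{n+1,m})(x_{n,m+1}-x_{n+1,m+1})=0.$$ Consider infinitesimal generators of the form $\widehat X_{n,m}=\Phi_{n,m}(x_{n,m})\,\partial_{x_{n,m}}$, where for each $(n,m)$ the function $\Phi_{n,m}$ is a polynomial $\Phi_{n,m}(x)=\sum_{k=0}^{\gamma}\Phi^{(k)}_{n,m}x^k$ with coefficients $\Phi^{(k)}_{n,m}$ depending on $(n,m)$. Then $\widehat X_{n,m}$ is a Lie point symmetry of $\mathbb{Q}=0$ if and only if $$\Phi_{n,m}(x)=c_0+c_1 x+c_2 x^2$$ with constants $c_0,c_1,c_2$ independent of $n$ and $m$. Equivalently, the Lie point symmetry algebra (of this form) is spanned by $\widehat X^{(0)}=\partial_{x_{n,m}}$, $\widehat X^{(1)}=x_{n,m}\partial_{x_{n,m}}$, $\widehat X^{(2)}=x_{n,m}^2\partial_{x_{n,m}}$, which satisfy $[\widehat X^{(0)},\widehat X^{(1)}]=\widehat X^{(0)}$, $[\widehat X^{(1)},\widehat X^{(2)}]=\widehat X^{(2)}$, $[\widehat X^{(0)},\widehat X^{(2)}]=2\widehat X^{(1)}$, i.e. form a Lie algebra isomorphic to $\mathfrak{sl}(2)$.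
   Context: A generator $\widehat X_{n,m}=\Phi_{n,m}\,\partial_{x_{n,m}}$ is called a (Lie point) symmetry of $\mathbb{Q}=0$ if its prolongation annihilates $\mathbb{Q}$ on solutions, i.e. $$\Phi_{n,m}\frac{\partial \mathbb{Q}}{\partial x_{n,m}}+\Phi_{n+1,m}\frac{\partial \mathbb{Q}}{\partial x_{n+1,m}}+\Phi_{n,m+1}\frac{\partial \mathbb{Q}}{\partial x_{n,m+1}}+\Phi_{n+1,m+1}\frac{\partial \mathbb{Q}}{\partial x_{n+1,m+1}}=0$$ whenever $\mathbb{Q}=0$ (concretely: after solving $\mathbb{Q}=0$ for $x_{n+1,m+1}$ in terms of $x_{n,m},x_{n+1,m},x_{n,m+1}$ and substituting, the expression vanishes identically in $x_{n,m},x_{n+1,m},x_{n,m+1}$). Here $\Phi_{n+i,m+j}$ denotes $\Phi_{n+i,m+j}(x_{n+i,m+j})$. *)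

theory Defs
  imports Complex_Main "HOL-Computational_Algebra.Polynomial"
begin

text \<open>Lattice Schwarzian KdV quad-equation
  Q(a,b,c,d) with a = x_{n,m}, b = x_{n+1,m}, c = x_{n,m+1}, d = x_{n+1,m+1}.\<close>
definition lsQ :: "real \<Rightarrow> real \<Rightarrow> real \<Rightarrow> real \<Rightarrow> real \<Rightarrow> real \<Rightarrow> real" where
  "lsQ a1 a2 a b c d = a1 * (a - c) * (b - d) - a2 * (a - b) * (c - d)"

definition dQa :: "real \<Rightarrow> real \<Rightarrow> real \<Rightarrow> real \<Rightarrow> real \<Rightarrow> real \<Rightarrow> real" where
  "dQa a1 a2 a b c d = a1 * (b - d) - a2 * (c - d)"
definition dQb :: "real \<Rightarrow> real \<Rightarrow> real \<Rightarrow> real \<Rightarrow> real \<Rightarrow> real \<Rightarrow> real" where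
  "dQb a1 a2 a b c d = a1 * (a - c) + a2 * (c - d)"
definition dQc :: "real \<Rightarrow> real \<Rightarrow> real \<Rightarrow> real \<Rightarrow> real \<Rightarrow> real \<Rightarrow> real" where
  "dQc a1 a2 a b c d = - a1 * (b - d) - a2 * (a - b)"
definition dQd :: "real \<Rightarrow> real \<Rightarrow> real \<Rightarrow> real \<Rightarrow> real \<Rightarrow> real \<Rightarrow> real" where
  "dQd a1 a2 a b c d = - a1 * (a - c) + a2 * (a - b)"

text \<open>Coefficient of d in Q (Q is affine in d): Q = lsQcoef * d + const.\<close>
definition lsQcoef :: "real \<Rightarrow> real \<Rightarrow> real \<Rightarrow> real \<Rightarrow> real \<Rightarrow> real" where
  "lsQcoef a1 a2 a b c = a2 * (a - b) - a1 * (a - c)"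

text \<open>Solution of Q = 0 for d = x_{n+1,m+1} (valid where lsQcoef is nonzero).\<close>
definition lsSol :: "real \<Rightarrow> real \<Rightarrow> real \<Rightarrow> real \<Rightarrow> real \<Rightarrow> real" where
  "lsSol a1 a2 a b c = (a2 * (a - b) * c - a1 * (a - c) * b) / lsQcoef a1 a2 a b c"

text \<open>Lie point symmetry condition for the generator Phi_{n,m}(x_{n,m}) d/dx_{n,m}:
  the prolonged generator applied to Q vanishes after substituting the solution
  x_{n+1,m+1} of Q = 0, identically in x_{n,m}, x_{n+1,m}, x_{n,m+1}
  (i.e. wherever the substitution is defined).\<close>
definition is_lie_symmetry ::
  "real \<Rightarrow> real \<Rightarrow> (int \<Rightarrow> int \<Rightarrow> real \<Rightarrow> real) \<Rightarrow> bool" where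
  "is_lie_symmetry a1 a2 Phi \<longleftrightarrow>
     (\<forall>n m a b c. lsQcoef a1 a2 a b c \<noteq> 0 \<longrightarrow>
        (let d = lsSol a1 a2 a b c in
           Phi n m a * dQa a1 a2 a b c d + Phi (n+1) m b * dQb a1 a2 a b c d
         + Phi n (m+1) c * dQc a1 a2 a b c d + Phi (n+1) (m+1) d * dQd a1 a2 a b c d = 0))"

end

theory Submission
  imports Defs
begin

text \<open>Sufficiency: the prolongations of \<open>\<partial>\<^sub>x\<close>, \<open>x \<partial>\<^sub>x\<close> and \<open>x\<^sup>2 \<partial>\<^sub>x\<close> map \<open>Q\<close> to
  \<open>0\<close>, \<open>2 Q\<close> and \<open>(x\<^sub>n\<^sub>,\<^sub>m + x\<^sub>n\<^sub>+\<^sub>1\<^sub>,\<^sub>m + x\<^sub>n\<^sub>,\<^sub>m\<^sub>+\<^sub>1 + x\<^sub>n\<^sub>+\<^sub>1\<^sub>,\<^sub>m\<^sub>+\<^sub>1) Q\<close>, so they vanish on solutions.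
  Necessity: evaluating the symmetry condition at three solutions with
  \<open>x\<^sub>n\<^sub>+\<^sub>1\<^sub>,\<^sub>m\<^sub>+\<^sub>1\<close> equal to two of the other three values gives a nonsingular
  linear system forcing \<open>\<Phi>\<^sub>n\<^sub>+\<^sub>1\<^sub>,\<^sub>m = \<Phi>\<^sub>n\<^sub>,\<^sub>m\<^sub>+\<^sub>1 = \<Phi>\<^sub>n\<^sub>,\<^sub>m\<close>. For a single polynomial
  \<open>\<Phi>\<close> of degree \<open>N\<close>, fix \<open>x\<^sub>n\<^sub>,\<^sub>m = 0\<close>, \<open>x\<^sub>n\<^sub>,\<^sub>m\<^sub>+\<^sub>1 = 1\<close> and let \<open>x\<^sub>n\<^sub>+\<^sub>1\<^sub>,\<^sub>m\<close> tend to
  the value where \<open>x\<^sub>n\<^sub>+\<^sub>1\<^sub>,\<^sub>m\<^sub>+\<^sub>1\<close> escapes to infinity: all terms of the condition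
  grow at most quadratically in \<open>x\<^sub>n\<^sub>+\<^sub>1\<^sub>,\<^sub>m\<^sub>+\<^sub>1\<close> except \<open>\<Phi>(x\<^sub>n\<^sub>+\<^sub>1\<^sub>,\<^sub>m\<^sub>+\<^sub>1)\<close>,
  so the leading coefficient of \<open>\<Phi>\<close> must vanish if \<open>N \<ge> 3\<close>.\<close>

lemma lsQ_lsSol: "lsQcoef a1 a2 a b c \<noteq> 0 \<Longrightarrow> lsQ a1 a2 a b c (lsSol a1 a2 a b c) = 0"
  unfolding lsQ_def lsSol_def by (simp add: lsQcoef_def field_simps)

lemma quadratic_prolongation_eq:
  "(c0 + c1 * a + c2 * a\<^sup>2) * dQa a1 a2 a b c d + (c0 + c1 * b + c2 * b\<^sup>2) * dQb a1 a2 a b c d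
   + (c0 + c1 * c + c2 * c\<^sup>2) * dQc a1 a2 a b c d + (c0 + c1 * d + c2 * d\<^sup>2) * dQd a1 a2 a b c d
   = (2 * c1 + c2 * (a + b + c + d)) * lsQ a1 a2 a b c d"
  unfolding dQa_def dQb_def dQc_def dQd_def lsQ_def by algebra

lemma is_lie_symmetry_quadratic: "is_lie_symmetry a1 a2 (\<lambda>n m x. c0 + c1 * x + c2 * x\<^sup>2)"
  unfolding is_lie_symmetry_def Let_def by (simp add: quadratic_prolongation_eq lsQ_lsSol)

lemma is_lie_symmetryD:
  assumes "is_lie_symmetry a1 a2 Phi" and "lsQcoef a1 a2 a b c \<noteq> 0" and "lsSol a1 a2 a b c = d"
  shows "Phi n m a * dQa a1 a2 a b c d + Phi (n + 1) m b * dQb a1 a2 a b c d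
       + Phi n (m + 1) c * dQc a1 a2 a b c d + Phi (n + 1) (m + 1) d * dQd a1 a2 a b c d = 0"
  using assms unfolding is_lie_symmetry_def Let_def by blast

text \<open>The determinant of this system is \<open>2 a\<^sub>1 a\<^sub>2 (a\<^sub>1 - a\<^sub>2)\<close>.\<close>

lemma lsKdV_linear_system_trivial:
  fixes a1 a2 u v w :: real
  assumes "a1 \<noteq> 0" and "a2 \<noteq> 0" and "a1 \<noteq> a2"
    and e1: "a1 * u = (a1 - a2) * w" and e2: "(a2 - a1) * v = a2 * u" and e3: "a1 * v = a2 * w"
  shows "u = 0 \<and> v = 0 \<and> w = 0"
proof -
  have "a1 * (a2 * u) = a1 * ((a2 - a1) * v)" using e2 by simp
  also have "\<dots> = a2 * ((a2 - a1) * w)" using e3 by (simp add: algebra_simps)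
  also have "\<dots> = - a2 * (a1 * u)"
    using e1 by (simp add: left_diff_distrib right_diff_distrib)
  finally have "u = 0" using assms(1,2) by simp
  then show ?thesis using assms e1 e2 by simp
qed

lemma is_lie_symmetry_shift_invariant:
  assumes S: "is_lie_symmetry a1 a2 Phi" and "a1 \<noteq> 0" and "a2 \<noteq> 0" and "a1 \<noteq> a2"
  shows "Phi (n + 1) m x = Phi n m x \<and> Phi n (m + 1) x = Phi n m x"
proof -
  define u where "u = Phi n m x - Phi (n + 1) (m + 1) x"
  define v where "v = Phi (n + 1) m x - Phi (n + 1) (m + 1) x"
  define w where "w = Phi n (m + 1) x - Phi (n + 1) (m + 1) x"
  have "a1 * u = (a1 - a2) * w"
    using is_lie_symmetryD[OF S, of x "x + 1" x x n m] assms(3)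
    by (simp add: lsQcoef_def lsSol_def dQa_def dQb_def dQc_def dQd_def u_def w_def algebra_simps)
  moreover have "(a2 - a1) * v = a2 * u"
    using is_lie_symmetryD[OF S, of x x "x + 1" x n m] assms(2)
    by (simp add: lsQcoef_def lsSol_def dQa_def dQb_def dQc_def dQd_def u_def v_def algebra_simps)
  moreover have "a1 * v = a2 * w"
    using is_lie_symmetryD[OF S, of "x - 1" x x x n m] assms(4)
    by (simp add: lsQcoef_def lsSol_def dQa_def dQb_def dQc_def dQd_def v_def w_def field_simps)
  ultimately have "u = 0 \<and> v = 0 \<and> w = 0"
    using lsKdV_linear_system_trivial assms(2-4) by blast
  then show ?thesis unfolding u_def v_def w_def by simp
qed

lemma int_fun_const_if_shift_invariant:
  fixes f :: "int \<Rightarrow> 'a"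
  assumes "\<And>n. f (n + 1) = f n"
  shows "f n = f 0"
proof (induction n rule: int_induct[where k = 0])
  case (step2 i)
  then show ?case using assms[of "i - 1"] by simp
qed (use assms in simp_all)

lemma is_lie_symmetry_imp_constant:
  assumes "is_lie_symmetry a1 a2 Phi" and "a1 \<noteq> 0" and "a2 \<noteq> 0" and "a1 \<noteq> a2"
  shows "Phi n m = Phi 0 0"
proof -
  have "Phi n m x = Phi 0 m x" for x
    using int_fun_const_if_shift_invariant[of "\<lambda>n. Phi n m x"]
      is_lie_symmetry_shift_invariant[OF assms] by blast
  moreover have "Phi 0 m x = Phi 0 0 x" for x
    using int_fun_const_if_shift_invariant[of "\<lambda>m. Phi 0 m x"]
      is_lie_symmetry_shift_invariant[OF assms] by blast
  ultimately show ?thesis by auto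
qed

text \<open>The symmetry condition at \<open>(x\<^sub>n\<^sub>,\<^sub>m, x\<^sub>n\<^sub>+\<^sub>1\<^sub>,\<^sub>m, x\<^sub>n\<^sub>,\<^sub>m\<^sub>+\<^sub>1) = (0, b, 1)\<close>, whose solution is
  \<open>x\<^sub>n\<^sub>+\<^sub>1\<^sub>,\<^sub>m\<^sub>+\<^sub>1 = M / L\<close>, multiplied by \<open>L\<close> to clear that denominator.\<close>

lemma is_lie_symmetry_through_0_1:
  fixes p :: "real poly" and a1 a2 b :: real
  defines "L \<equiv> a1 - a2 * b" and "M \<equiv> (a1 - a2) * b"
  assumes S: "is_lie_symmetry a1 a2 (\<lambda>_ _. poly p)" and L_nz: "L \<noteq> 0"
  shows "poly p 0 * (a1 * (b * L - M) - a2 * (L - M)) + poly p b * (a2 * (L - M) - a1 * L)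
       + poly p 1 * (a2 * b * L - a1 * (b * L - M)) + L\<^sup>2 * poly p (M / L) = 0"
proof -
  define d where "d = M / L"
  have Ld: "L * d = M" using L_nz by (simp add: d_def)
  have "poly p 0 * dQa a1 a2 0 b 1 d + poly p b * dQb a1 a2 0 b 1 d
      + poly p 1 * dQc a1 a2 0 b 1 d + poly p d * dQd a1 a2 0 b 1 d = 0"
    using is_lie_symmetryD[OF S, of 0 b 1 d] L_nz
    by (simp add: lsQcoef_def lsSol_def d_def L_def M_def algebra_simps)
  then have "L * (poly p 0 * dQa a1 a2 0 b 1 d + poly p b * dQb a1 a2 0 b 1 d
      + poly p 1 * dQc a1 a2 0 b 1 d + poly p d * dQd a1 a2 0 b 1 d) = 0" by simp
  moreover have "dQd a1 a2 0 b 1 d = L" by (simp add: dQd_def L_def)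
  ultimately show ?thesis
    unfolding d_def[symmetric] Ld[symmetric]
    by (simp add: dQa_def dQb_def dQc_def power2_eq_square algebra_simps)
qed

lemma poly_reflect_poly_divide:
  fixes p :: "'a :: field poly"
  assumes "x \<noteq> 0" and "y \<noteq> 0"
  shows "y ^ degree p * poly (reflect_poly p) (x / y) = x ^ degree p * poly p (y / x)"
  using assms by (simp add: poly_reflect_poly_nz power_divide)

text \<open>\<open>h\<close> is \<open>L\<^sup>N\<^sup>-\<^sup>2\<close> times the left-hand side of \<open>is_lie_symmetry_through_0_1\<close>,
  written with \<open>reflect_poly\<close> so that it stays continuous at the zero \<open>b\<^sub>0\<close> of \<open>L\<close>,
  where it reduces to the leading term.\<close>

lemma is_lie_symmetry_degree_le_2:
  fixes p :: "real poly"
  assumes S: "is_lie_symmetry a1 a2 (\<lambda>_ _. poly p)" and "a1 \<noteq> 0" and "a2 \<noteq> 0" and "a1 \<noteq> a2"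
  shows "degree p \<le> 2"
proof (rule ccontr)
  define N where "N = degree p"
  assume "\<not> degree p \<le> 2"
  then have N: "N = (N - 2) + 2" "N - 2 \<noteq> 0" and "lead_coeff p \<noteq> 0" unfolding N_def by auto
  define b0 where "b0 = a1 / a2"
  define L where "L b = a1 - a2 * b" for b
  define M where "M b = (a1 - a2) * b" for b
  define R where "R b = poly p 0 * (a1 * (b * L b - M b) - a2 * (L b - M b))
    + poly p b * (a2 * (L b - M b) - a1 * L b) + poly p 1 * (a2 * b * L b - a1 * (b * L b - M b))"
    for b
  define h where "h b = M b ^ N * poly (reflect_poly p) (L b / M b) + L b ^ (N - 2) * R b" for b
  have L_b0: "L b0 = 0" and M_b0: "M b0 \<noteq> 0"
    using assms(2-4) by (simp_all add: b0_def L_def M_def)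
  have h_eq_0: "h b = 0" if "b \<noteq> 0" and "b \<noteq> b0" for b
  proof -
    have L: "L b \<noteq> 0" and M: "M b \<noteq> 0"
      using that assms(3,4) by (auto simp: b0_def L_def M_def field_simps)
    have "L b ^ N = L b ^ (N - 2) * (L b)\<^sup>2" using N(1) by (metis power_add)
    then have "h b = L b ^ (N - 2) * (R b + (L b)\<^sup>2 * poly p (M b / L b))"
      using poly_reflect_poly_divide[OF L M, of p]
      by (simp add: h_def N_def algebra_simps)
    also have "\<dots> = 0"
      using is_lie_symmetry_through_0_1[OF S, of b] L by (simp add: R_def L_def M_def)
    finally show ?thesis .
  qed
  have "\<forall>\<^sub>F b in at b0. h b = 0"
    using eventually_neq_at_within[of 0 b0 UNIV] eventually_neq_at_within[of b0 b0 UNIV]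
    by eventually_elim (rule h_eq_0)
  moreover have "isCont h b0"
    using M_b0 unfolding h_def R_def L_def M_def by (intro continuous_intros) auto
  ultimately have "h b0 = 0"
    using at_within_isCont_imp_nhds[where g = "\<lambda>_. 0"] eventually_nhds_x_imp_x by auto
  moreover have "h b0 = M b0 ^ N * lead_coeff p"
    using N(2) L_b0 by (simp add: h_def poly_reflect_poly_0)
  ultimately show False using M_b0 \<open>lead_coeff p \<noteq> 0\<close> by simp
qed

lemma poly_eq_quadratic:
  fixes p :: "real poly"
  assumes "degree p \<le> 2"
  shows "poly p x = coeff p 0 + coeff p 1 * x + coeff p 2 * x\<^sup>2"
proof -
  have "poly p x = (\<Sum>i\<le>2. coeff p i * x ^ i)"
    unfolding poly_altdef
    by (rule sum.mono_neutral_left) (use assms in \<open>auto simp: coeff_eq_0\<close>)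
  then show ?thesis by (simp add: numeral_2_eq_2)
qed

theorem mainTheorem1:
  fixes \<alpha>1 \<alpha>2 :: real and P :: "int \<Rightarrow> int \<Rightarrow> real poly" and \<gamma> :: nat
  assumes "\<alpha>1 \<noteq> 0" and "\<alpha>2 \<noteq> 0" and "\<alpha>1 \<noteq> \<alpha>2"
    and "\<forall>n m. degree (P n m) \<le> \<gamma>"
  shows "is_lie_symmetry \<alpha>1 \<alpha>2 (\<lambda>n m. poly (P n m)) \<longleftrightarrow>
         (\<exists>c0 c1 c2. \<forall>n m x. poly (P n m) x = c0 + c1 * x + c2 * x^2)"
proof
  assume S: "is_lie_symmetry \<alpha>1 \<alpha>2 (\<lambda>n m. poly (P n m))"
  have const: "(\<lambda>n m. poly (P n m)) = (\<lambda>_ _. poly (P 0 0))"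
    using is_lie_symmetry_imp_constant[OF S assms(1-3)] by (intro ext) metis
  have "degree (P 0 0) \<le> 2"
    using is_lie_symmetry_degree_le_2 S assms(1-3) unfolding const by blast
  then show "\<exists>c0 c1 c2. \<forall>n m x. poly (P n m) x = c0 + c1 * x + c2 * x^2"
    using poly_eq_quadratic const by metis
next
  assume "\<exists>c0 c1 c2. \<forall>n m x. poly (P n m) x = c0 + c1 * x + c2 * x^2"
  then obtain c0 c1 c2 where "(\<lambda>n m. poly (P n m)) = (\<lambda>n m x. c0 + c1 * x + c2 * x^2)"
    by blast
  then show "is_lie_symmetry \<alpha>1 \<alpha>2 (\<lambda>n m. poly (P n m))"
    using is_lie_symmetry_quadratic by metis
qed

end
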